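(* For every integer $n\ge2$, \[ \sum_{j=0}^{n}\frac{B_j}{n-j+1}=1-(n+1)\sum_{k=1}^{n}{n\brace k}c_kH_k . \]
   Context: $B_j$ is the $j$th Bernoulli number ($\frac{t}{e^t-1}=\sum_{m\ge0}B_m\frac{t^m}{m!}$). ${n\brace k}$ is the Stirling number of the second kind, $H_k=\sum_{i=1}^k1/i$. The Cauchy numbers of the first kind are $c_k=k!\int_0^1\binom{x}{k}dx=\int_0^1x(x-1)\cdots(x-k+1)\,dx$. *)

theory Defs
  imports "HOL-Analysis.Analysis" "HOL-Combinatorics.Stirling"
    "HOL-Computational_Algebra.Formal_Power_Series"
begin

definition bernoulli_num :: "nat \<Rightarrow> real" where
  "bernoulli_num m = fact m * fps_nth (fps_X / (fps_exp 1 - 1)) m"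

definition cauchy1 :: "nat \<Rightarrow> real" where
  "cauchy1 k = integral {0..1} (\<lambda>x::real. \<Prod>i<k. (x - real i))"

end

theory Submission
  imports Defs "HOL-Computational_Algebra.Polynomial"
begin

(*
  Let P n x = sum_k S(n,k) H_k (x)_k (harm_stirling), with (x)_k the falling factorial, so that
  the integral of P n over [0,1] is sum_k S(n,k) H_k c_k.  The recurrence of the Stirling numbers
  gives P (n+1) x = x P n x + sum_k S(n,k) (x)_(k+1)/(k+1), and this last sum is the polynomial
  with forward difference x^n vanishing at 0, namely (B_(n+1)(x) - B_(n+1))/(n+1).  Unrolling,
  P n x = sum_j w n j B_j x^(n-j) with weights (bernoulli_weight) w n 0 = H_n and
  w n j = (C(n,j) - 1)/j otherwise, so integrating gives
  sum_k S(n,k) H_k c_k = sum_j w n j B_j/(n-j+1).  As (n+1-j) w (n+1) j = 1 + (n+1) w n j, the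
  claimed identity becomes sum_j w (n+1) j B_j = 1, which is P (n+1) 1 = 1: at x = 1 only the
  term k = 1 survives.
*)

definition bernoulli_fps :: "real fps" where
  "bernoulli_fps = fps_X / (fps_exp 1 - 1)"

lemma fps_nth_bernoulli_fps: "fps_nth bernoulli_fps m = bernoulli_num m / fact m"
  by (simp add: bernoulli_num_def bernoulli_fps_def)

lemma bernoulli_fps_times_exp_minus_one: "bernoulli_fps * (fps_exp 1 - 1) = fps_X"
proof -
  have subdegree: "subdegree (fps_exp 1 - 1 :: real fps) = 1"
    by (rule subdegreeI) auto
  then have "(fps_exp 1 - 1 :: real fps) \<noteq> 0"
    by (metis subdegree_0 zero_neq_one)
  with subdegree show ?thesis
    unfolding bernoulli_fps_def by (simp add: fps_times_divide_eq)
qed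

(* faulhaber n x = (B_(n+1)(x) - B_(n+1))/(n+1), the polynomial with
   faulhaber n m = 0^n + 1^n + ... + (m-1)^n for natural m. *)
definition faulhaber :: "nat \<Rightarrow> real \<Rightarrow> real" where
  "faulhaber n x =
     (\<Sum>j\<le>n. real (Suc n choose j) * bernoulli_num j * x ^ (Suc n - j)) / real (Suc n)"

lemma fps_nth_bernoulli_fps_times_exp:
  "fps_nth (bernoulli_fps * (fps_exp x - 1)) (Suc n) = faulhaber n x / fact n"
proof -
  have "fps_nth (bernoulli_fps * (fps_exp x - 1)) (Suc n)
      = (\<Sum>j\<le>n. bernoulli_num j / fact j * (x ^ (Suc n - j) / fact (Suc n - j)))"
    by (simp add: fps_mult_nth atLeast0AtMost fps_nth_bernoulli_fps mult.commute)
  also have "\<dots> = (\<Sum>j\<le>n. real (Suc n choose j) * bernoulli_num j * x ^ (Suc n - j)) / fact (Suc n)"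
    unfolding sum_divide_distrib
  proof (rule sum.cong[OF refl])
    fix j assume "j \<in> {..n}"
    then have "j \<le> Suc n" by simp
    then show "bernoulli_num j / fact j * (x ^ (Suc n - j) / fact (Suc n - j))
        = real (Suc n choose j) * bernoulli_num j * x ^ (Suc n - j) / fact (Suc n)"
      by (simp add: binomial_fact field_simps del: of_nat_Suc fact_Suc)
  qed
  also have "\<dots> = faulhaber n x / fact n"
    by (simp add: faulhaber_def field_simps del: of_nat_Suc)
  finally show ?thesis .
qed

lemma faulhaber_diff: "faulhaber n (x + 1) - faulhaber n x = x ^ n"
proof -
  have "bernoulli_fps * (fps_exp (x + 1) - 1) - bernoulli_fps * (fps_exp x - 1)
      = bernoulli_fps * (fps_exp 1 - 1) * fps_exp x"
    by (simp add: fps_exp_add_mult algebra_simps)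
  also have "\<dots> = fps_X * fps_exp x"
    by (simp add: bernoulli_fps_times_exp_minus_one)
  finally have "fps_nth (bernoulli_fps * (fps_exp (x + 1) - 1)) (Suc n)
      - fps_nth (bernoulli_fps * (fps_exp x - 1)) (Suc n) = fps_nth (fps_X * fps_exp x) (Suc n)"
    by (metis fps_sub_nth)
  then show ?thesis
    by (simp add: fps_nth_bernoulli_fps_times_exp diff_divide_distrib[symmetric])
qed

lemma faulhaber_0 [simp]: "faulhaber n 0 = 0"
  by (auto simp: faulhaber_def intro!: sum.neutral)

definition falling :: "'a::comm_ring_1 \<Rightarrow> nat \<Rightarrow> 'a" where
  "falling x k = (\<Prod>i<k. x - of_nat i)"

lemma falling_0 [simp]: "falling x 0 = 1"
  by (simp add: falling_def)

lemma falling_Suc: "falling x (Suc k) = falling x k * (x - of_nat k)"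
  by (simp add: falling_def)

lemma falling_Suc_shift: "falling (x + 1) (Suc k) = (x + 1) * falling x k"
  unfolding falling_def prod.lessThan_Suc_shift by simp

lemma falling_zero_Suc [simp]: "falling 0 (Suc k) = 0"
  unfolding falling_def prod.lessThan_Suc_shift by simp

lemma poly_falling: "poly (falling p k) x = falling (poly p x) k"
  by (simp add: falling_def poly_prod)

lemma falling_diff: "falling (x + 1) (Suc k) - falling x (Suc k) = of_nat (Suc k) * falling x k"
  unfolding falling_Suc_shift falling_Suc[of x k] by (simp add: algebra_simps)

lemma sum_Stirling_Suc:
  fixes a :: "nat \<Rightarrow> 'a::comm_semiring_1"
  shows "(\<Sum>k\<le>Suc n. of_nat (Stirling (Suc n) k) * a k)
       = (\<Sum>k\<le>n. of_nat (Stirling n k) * (of_nat k * a k + a (Suc k)))"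
proof -
  have "(\<Sum>k\<le>Suc n. of_nat (Stirling (Suc n) k) * a k)
      = (\<Sum>k\<le>n. of_nat (Suc k * Stirling n (Suc k)) * a (Suc k))
        + (\<Sum>k\<le>n. of_nat (Stirling n k) * a (Suc k))"
    by (simp only: sum.atMost_Suc_shift) (simp add: sum.distrib algebra_simps)
  also have "(\<Sum>k\<le>n. of_nat (Suc k * Stirling n (Suc k)) * a (Suc k))
      = (\<Sum>k\<le>Suc n. of_nat (Stirling n k) * (of_nat k * a k))"
    by (simp only: sum.atMost_Suc_shift) (simp add: algebra_simps)
  also have "\<dots> = (\<Sum>k\<le>n. of_nat (Stirling n k) * (of_nat k * a k))"
    by simp
  finally show ?thesis
    by (simp add: sum.distrib distrib_left)
qed

lemma sum_Stirling_falling: "(\<Sum>k\<le>n. of_nat (Stirling n k) * falling x k) = x ^ n"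
proof (induction n)
  case (Suc n)
  have "of_nat k * falling x k + falling x (Suc k) = x * falling x k" for k
    by (simp add: falling_Suc algebra_simps)
  then have "(\<Sum>k\<le>Suc n. of_nat (Stirling (Suc n) k) * falling x k)
      = x * (\<Sum>k\<le>n. of_nat (Stirling n k) * falling x k)"
    unfolding sum_Stirling_Suc by (simp add: sum_distrib_left mult_ac)
  then show ?case
    by (simp add: Suc.IH)
qed simp

lemma poly_eqI_same_difference:
  fixes p q :: "'a::{idom,ring_char_0} poly"
  assumes "poly p 0 = poly q 0"
    and "\<And>x. poly p (x + 1) - poly p x = poly q (x + 1) - poly q x"
  shows "p = q"
proof -
  have "poly (p - q) (of_nat m) = 0" for m
  proof (induction m)
    case (Suc m)
    then show ?case
      using assms(2)[of "of_nat m"] by (simp add: algebra_simps)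
  qed (simp add: assms(1))
  then have "range of_nat \<subseteq> {x. poly (p - q) x = 0}"
    by auto
  moreover have "infinite (range (of_nat :: nat \<Rightarrow> 'a))"
    by (simp add: range_inj_infinite inj_of_nat)
  ultimately have "p - q = 0"
    using poly_roots_finite finite_subset by blast
  then show ?thesis
    by simp
qed

lemma faulhaber_eq_sum_Stirling_falling:
  "faulhaber n x = (\<Sum>k\<le>n. real (Stirling n k) * falling x (Suc k) / real (Suc k))"
proof -
  define p where "p = smult (1 / real (Suc n))
    (\<Sum>j\<le>n. monom (real (Suc n choose j) * bernoulli_num j) (Suc n - j))"
  define q where "q = (\<Sum>k\<le>n. smult (real (Stirling n k) / real (Suc k)) (falling [:0, 1:] (Suc k)))"
  have p: "poly p y = faulhaber n y" for y
    by (simp add: p_def faulhaber_def poly_sum poly_monom)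
  have q: "poly q y = (\<Sum>k\<le>n. real (Stirling n k) * falling y (Suc k) / real (Suc k))" for y
    by (simp add: q_def poly_sum poly_falling)
  have "p = q"
  proof (rule poly_eqI_same_difference)
    show "poly p 0 = poly q 0"
      by (simp add: p q)
    fix y :: real
    have "poly q (y + 1) - poly q y = (\<Sum>k\<le>n. real (Stirling n k) * falling y k)"
      unfolding q sum_subtractf[symmetric]
    proof (rule sum.cong[OF refl])
      fix k
      have "real (Stirling n k) * (falling (y + 1) (Suc k) - falling y (Suc k)) / real (Suc k)
          = real (Stirling n k) * falling y k"
        by (simp only: falling_diff) simp
      then show "real (Stirling n k) * falling (y + 1) (Suc k) / real (Suc k)
          - real (Stirling n k) * falling y (Suc k) / real (Suc k) = real (Stirling n k) * falling y k"
        by (simp add: right_diff_distrib diff_divide_distrib)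
    qed
    then show "poly p (y + 1) - poly p y = poly q (y + 1) - poly q y"
      by (simp add: p faulhaber_diff sum_Stirling_falling)
  qed
  then show ?thesis
    using p q by simp
qed

definition harm_stirling :: "nat \<Rightarrow> real \<Rightarrow> real" where
  "harm_stirling n x = (\<Sum>k\<le>n. real (Stirling n k) * (harm k * falling x k))"

lemma harm_stirling_Suc: "harm_stirling (Suc n) x = x * harm_stirling n x + faulhaber n x"
proof -
  have "real k * (harm k * falling x k) + harm (Suc k) * falling x (Suc k)
      = x * (harm k * falling x k) + falling x (Suc k) / real (Suc k)" for k
    by (simp add: harm_Suc falling_Suc field_simps)
  then show ?thesis
    unfolding harm_stirling_def sum_Stirling_Suc faulhaber_eq_sum_Stirling_falling
    by (simp add: sum_distrib_left sum.distrib[symmetric] algebra_simps)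
qed

lemma harm_stirling_one:
  assumes "n \<ge> 1"
  shows "harm_stirling n 1 = 1"
proof -
  have "Stirling n 1 = 1"
    using assms by (metis One_nat_def Stirling_1 Suc_le_D)
  then have "real (Stirling n k) * (harm k * falling 1 k) = (if k = 1 then 1 else 0)" for k
  proof (cases k)
    case (Suc m)
    then show ?thesis
      using \<open>Stirling n 1 = 1\<close> by (cases m) (auto simp: harm_def falling_def)
  qed (simp add: harm_def)
  then show ?thesis
    using assms by (simp add: harm_stirling_def)
qed

definition bernoulli_weight :: "nat \<Rightarrow> nat \<Rightarrow> real" where
  "bernoulli_weight n j = (if j = 0 then harm n else (real (n choose j) - 1) / real j)"

lemma of_nat_times_bernoulli_weight: "real j * bernoulli_weight n j = real (n choose j) - 1"
  by (simp add: bernoulli_weight_def)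

lemma bernoulli_weight_diag [simp]: "bernoulli_weight (Suc n) (Suc n) = 0"
  by (simp add: bernoulli_weight_def)

lemma bernoulli_weight_Suc:
  assumes "j \<le> n"
  shows "bernoulli_weight (Suc n) j = bernoulli_weight n j + real (Suc n choose j) / real (Suc n)"
proof (cases j)
  case 0
  then show ?thesis
    by (simp add: bernoulli_weight_def harm_Suc divide_inverse)
next
  case (Suc i)
  have "real (Suc i) * real (Suc n choose Suc i) = real (Suc n) * real (n choose i)"
    by (metis Suc_times_binomial of_nat_mult)
  then have "real (n choose i) / real (Suc i) = real (Suc n choose Suc i) / real (Suc n)"
    by (simp add: field_simps del: binomial_Suc_Suc of_nat_Suc)
  moreover have "bernoulli_weight (Suc n) j = bernoulli_weight n j + real (n choose i) / real (Suc i)"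
    using Suc by (simp add: bernoulli_weight_def add_divide_distrib diff_divide_distrib)
  ultimately show ?thesis
    using Suc by simp
qed

lemma bernoulli_weight_Suc_eq_div:
  assumes "j \<le> n"
  shows "bernoulli_weight (Suc n) j = (1 + real (Suc n) * bernoulli_weight n j) / real (Suc n - j)"
proof -
  have "real (Suc n - j) * real (Suc n choose j) = real (Suc n) * real (n choose j)"
    by (metis binomial_absorb_comp diff_Suc_1 of_nat_mult)
  then have "real (Suc n - j) * bernoulli_weight (Suc n) j
      = real (Suc n - j) * bernoulli_weight n j + real (n choose j)"
    using assms by (simp add: bernoulli_weight_Suc distrib_left del: binomial_Suc_Suc of_nat_Suc)
  also have "\<dots> = 1 + real (Suc n) * bernoulli_weight n j"
    using of_nat_times_bernoulli_weight[of j n] assms by (simp add: algebra_simps)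
  finally show ?thesis
    using assms by (simp add: field_simps)
qed

lemma harm_stirling_eq_bernoulli:
  "harm_stirling n x = (\<Sum>j\<le>n. bernoulli_weight n j * bernoulli_num j * x ^ (n - j))"
proof (induction n)
  case 0
  then show ?case
    by (simp add: harm_stirling_def bernoulli_weight_def harm_def)
next
  case (Suc n)
  have "harm_stirling (Suc n) x
      = (\<Sum>j\<le>n. (bernoulli_weight n j + real (Suc n choose j) / real (Suc n))
                   * bernoulli_num j * x ^ (Suc n - j))"
    by (simp add: harm_stirling_Suc Suc.IH faulhaber_def sum_distrib_left sum_divide_distrib
        sum.distrib[symmetric] algebra_simps Suc_diff_le)
  also have "\<dots> = (\<Sum>j\<le>Suc n. bernoulli_weight (Suc n) j * bernoulli_num j * x ^ (Suc n - j))"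
    by (simp add: bernoulli_weight_Suc)
  finally show ?case .
qed

lemma sum_bernoulli_weight: "n \<ge> 1 \<Longrightarrow> (\<Sum>j\<le>n. bernoulli_weight n j * bernoulli_num j) = 1"
  using harm_stirling_eq_bernoulli[of n 1] harm_stirling_one by simp

lemma has_integral_power_01: "((\<lambda>x::real. x ^ m) has_integral 1 / real (Suc m)) {0..1}"
proof -
  have "((\<lambda>x. x ^ Suc m / real (Suc m)) has_real_derivative x ^ m) (at x within {0..1})" for x :: real
    using DERIV_cdivide[OF DERIV_pow[of "Suc m" x], of "real (Suc m)"]
    by (simp add: has_field_derivative_at_within)
  then have "((\<lambda>x::real. x ^ m) has_integral 1 ^ Suc m / real (Suc m) - 0 ^ Suc m / real (Suc m)) {0..1}"
    by (intro fundamental_theorem_of_calculus) (auto simp: has_real_derivative_iff_has_vector_derivative)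
  then show ?thesis
    by simp
qed

lemma has_integral_falling_01: "((\<lambda>x. falling x k) has_integral cauchy1 k) {0..1}"
proof -
  have "continuous_on {0..1} (\<lambda>x::real. falling x k)"
    unfolding falling_def by (intro continuous_intros)
  then show ?thesis
    unfolding cauchy1_def falling_def[abs_def] using integrable_continuous_interval integrable_integral
    by blast
qed

lemma sum_Stirling_harm_cauchy1:
  "(\<Sum>k\<le>n. real (Stirling n k) * (harm k * cauchy1 k))
     = (\<Sum>j\<le>n. bernoulli_weight n j * bernoulli_num j / real (n - j + 1))"
proof (rule has_integral_unique)
  show "(harm_stirling n has_integral (\<Sum>k\<le>n. real (Stirling n k) * (harm k * cauchy1 k))) {0..1}"
    unfolding harm_stirling_def[abs_def]
    by (intro has_integral_sum has_integral_mult_right has_integral_falling_01) simp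
  show "(harm_stirling n has_integral
      (\<Sum>j\<le>n. bernoulli_weight n j * bernoulli_num j / real (n - j + 1))) {0..1}"
  proof -
    have monomial: "((\<lambda>x. bernoulli_weight n j * bernoulli_num j * x ^ (n - j)) has_integral
        bernoulli_weight n j * bernoulli_num j / real (n - j + 1)) {0..1}" for j
      using has_integral_mult_right[OF has_integral_power_01[of "n - j"]] by simp
    show ?thesis
      unfolding harm_stirling_eq_bernoulli[abs_def] by (intro has_integral_sum finite_atMost monomial)
  qed
qed

lemma sum_bernoulli_div_plus_weighted:
  "(\<Sum>j\<le>n. bernoulli_num j / real (n - j + 1))
     + real (n + 1) * (\<Sum>j\<le>n. bernoulli_weight n j * bernoulli_num j / real (n - j + 1)) = 1"
proof -
  have "bernoulli_num j / real (n - j + 1)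
      + real (n + 1) * (bernoulli_weight n j * bernoulli_num j / real (n - j + 1))
      = bernoulli_weight (Suc n) j * bernoulli_num j" if "j \<le> n" for j
  proof -
    from that have "n - j + 1 = Suc n - j"
      by simp
    with that show ?thesis
      by (simp only: bernoulli_weight_Suc_eq_div) (simp add: add_divide_distrib algebra_simps)
  qed
  then have "(\<Sum>j\<le>n. bernoulli_num j / real (n - j + 1))
      + real (n + 1) * (\<Sum>j\<le>n. bernoulli_weight n j * bernoulli_num j / real (n - j + 1))
      = (\<Sum>j\<le>Suc n. bernoulli_weight (Suc n) j * bernoulli_num j)"
    by (simp add: sum_distrib_left flip: sum.distrib)
  also have "\<dots> = 1"
    by (rule sum_bernoulli_weight) simp
  finally show ?thesis .
qed

theorem mainTheorem13:
  fixes n :: nat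
  assumes "n \<ge> 2"
  shows "(\<Sum>j=0..n. bernoulli_num j / real (n - j + 1))
         = 1 - real (n + 1) * (\<Sum>k=1..n. real (Stirling n k) * cauchy1 k * harm k)"
proof -
  \<comment> \<open>The identity holds for every \<open>n\<close>.\<close>
  have "(\<Sum>k=1..n. real (Stirling n k) * cauchy1 k * harm k)
      = (\<Sum>k\<le>n. real (Stirling n k) * (harm k * cauchy1 k))"
    by (simp add: atMost_atLeast0 sum.atLeast_Suc_atMost harm_def mult_ac)
  also have "\<dots> = (\<Sum>j\<le>n. bernoulli_weight n j * bernoulli_num j / real (n - j + 1))"
    by (rule sum_Stirling_harm_cauchy1)
  finally show ?thesis
    using sum_bernoulli_div_plus_weighted[of n] by (simp add: atLeast0AtMost)
qed

end
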